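(* Let $n\ge 2$ and $1\le k<n$, and let $G=H_B(n,k)$. Then: (i) every vertex of $V_1$ has degree $d_{V_1}(k)=\sum_{s=1}^{k}2^{s-1}\binom{k}{s}-1+\sum_{t=1}^{n-k}2^{k+t-1}\binom{n-k}{t}=\frac{3^k-3}{2}+2^{k-1}(3^{n-k}-1)$, and there are $\binom{n}{k}$ such vertices; (ii) for $1\le r<k$, every $r$-vertex of $V_2$ has degree $\binom{n-r}{k-r}$, and there are $2^{r-1}\binom{n}{r}$ such vertices; (iii) every $k$-vertex of $V_2$ has degree $1$, and there are $(2^{k-1}-1)\binom{n}{k}$ such vertices; (iv) for $k<r\le n$, every $r$-vertex of $V_2$ has degree $\binom{r}{k}$, and there are $2^{r-1}\binom{n}{r}$ such vertices. Consequently the degree sequence of $G$ is obtained by arranging these degrees, each repeated with the stated multiplicity, in non-increasing order.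
   Context: Fix integers $n\ge 2$ and $1\le k<n$ and positive real numbers $x_1<x_2<\dots<x_n$. Let $\mathscr{B}_n=\{\pm x_1,\pm x_2,\dots,\pm x_{n-1},x_n\}$ (so $-x_n\notin\mathscr{B}_n$). Let $\phi(\mathscr{B}_n)$ be the family of all nonempty subsets $S\subseteq\mathscr{B}_n$ whose elements have pairwise distinct absolute values and whose element of largest absolute value is positive. Let $\mathscr{B}_n^+=\{x_1,\dots,x_n\}$, let $V_1$ be the set of all $k$-element subsets of $\mathscr{B}_n^+$, and let $V_2=\phi(\mathscr{B}_n)\setminus V_1$. For $A\in\phi(\mathscr{B}_n)$ put $A^\dagger=\{|a|:a\in A\}$. The bipartite Kneser B type-$k$ graph $H_B(n,k)$ is the simple graph with vertex set $V_1\cup V_2$ in which $X\in V_1$ and $Y\in V_2$ are adjacent if and only if $X\subseteq Y^\dagger$ or $Y^\dagger\subseteq X$, and there are no other edges. An $r$-vertex is a vertex having exactly $r$ elements. *)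

theory Defs
  imports Complex_Main "HOL-Library.Multiset"
begin

definition Bset :: "(nat \<Rightarrow> real) \<Rightarrow> nat \<Rightarrow> real set" where
  "Bset x n = {x i | i. 1 \<le> i \<and> i \<le> n} \<union> {- x i | i. 1 \<le> i \<and> i < n}"

definition Bpos :: "(nat \<Rightarrow> real) \<Rightarrow> nat \<Rightarrow> real set" where
  "Bpos x n = {x i | i. 1 \<le> i \<and> i \<le> n}"

definition phiB :: "(nat \<Rightarrow> real) \<Rightarrow> nat \<Rightarrow> real set set" where
  "phiB x n = {S. S \<noteq> {} \<and> S \<subseteq> Bset x n \<and> inj_on abs S \<and>
                 (\<forall>a\<in>S. (\<forall>b\<in>S. \<bar>b\<bar> \<le> \<bar>a\<bar>) \<longrightarrow> a > 0)}"

definition V1 :: "(nat \<Rightarrow> real) \<Rightarrow> nat \<Rightarrow> nat \<Rightarrow> real set set" where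
  "V1 x n k = {X. X \<subseteq> Bpos x n \<and> card X = k}"

definition V2 :: "(nat \<Rightarrow> real) \<Rightarrow> nat \<Rightarrow> nat \<Rightarrow> real set set" where
  "V2 x n k = phiB x n - V1 x n k"

definition dagger :: "real set \<Rightarrow> real set" where
  "dagger A = abs ` A"

definition HBverts :: "(nat \<Rightarrow> real) \<Rightarrow> nat \<Rightarrow> nat \<Rightarrow> real set set" where
  "HBverts x n k = V1 x n k \<union> V2 x n k"

definition HBadj :: "(nat \<Rightarrow> real) \<Rightarrow> nat \<Rightarrow> nat \<Rightarrow> real set \<Rightarrow> real set \<Rightarrow> bool" where
  "HBadj x n k A B \<longleftrightarrow>
     (A \<in> V1 x n k \<and> B \<in> V2 x n k \<and> (A \<subseteq> dagger B \<or> dagger B \<subseteq> A)) \<or>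
     (B \<in> V1 x n k \<and> A \<in> V2 x n k \<and> (B \<subseteq> dagger A \<or> dagger A \<subseteq> B))"

definition HBdeg :: "(nat \<Rightarrow> real) \<Rightarrow> nat \<Rightarrow> nat \<Rightarrow> real set \<Rightarrow> nat" where
  "HBdeg x n k A = card {B \<in> HBverts x n k. HBadj x n k A B}"

definition dV1 :: "nat \<Rightarrow> nat \<Rightarrow> nat" where
  "dV1 n k = (\<Sum>s=1..k. 2^(s-1) * (k choose s)) - 1
             + (\<Sum>t=1..n-k. 2^(k+t-1) * ((n-k) choose t))"

end

theory Submission
  imports Defs
begin

text \<open>A signed set is determined by its support (the set of absolute values of its elements)
together with the part of the support that carries a minus sign. Since the element of largest
absolute value must be positive, every nonempty support \<open>T\<close> carries exactly \<open>2^(|T|-1)\<close>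
signed sets. The neighbours of a \<open>k\<close>-subset \<open>X\<close> are the signed sets other than \<open>X\<close> whose support
is comparable with \<open>X\<close>; summing \<open>2^(|T|-1)\<close> over the supports \<open>T \<subseteq> X\<close> and \<open>T = X \<union> U\<close>
with \<open>U\<close> disjoint from \<open>X\<close> gives \<open>d\<^sub>V\<^sub>1(k)\<close>, and the binomial theorem gives its closed form.
A vertex \<open>Y\<close> of \<open>V\<^sub>2\<close> is adjacent exactly to the \<open>k\<close>-subsets comparable with its support, which are
counted by a single binomial coefficient according as \<open>|Y| < k\<close>, \<open>|Y| = k\<close> or \<open>|Y| > k\<close>.
Grouping \<open>V\<^sub>2\<close> by size yields the degree multiset.\<close>

section \<open>Binomial sums and counting subsets\<close>

lemma sum_pow2_binomial: "2 * (\<Sum>s=1..m. 2^(s-1) * (m choose s)) + 1 = (3::nat)^m"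
proof -
  have "(3::nat)^m = (\<Sum>s\<le>m. (m choose s) * 2^s)"
    using binomial_ring[of "2::nat" 1 m] by simp
  also have "\<dots> = (\<Sum>s\<in>insert 0 {1..m}. (m choose s) * 2^s)"
    by (rule sum.cong) auto
  also have "\<dots> = 1 + 2 * (\<Sum>s=1..m. 2^(s-1) * (m choose s))"
    unfolding sum_distrib_left by (simp, rule sum.cong) (auto simp: power_eq_if)
  finally show ?thesis by simp
qed

lemma sum_pow2_binomial_pos:
  assumes "1 \<le> m"
  shows "1 \<le> (\<Sum>s=1..m. 2^(s-1) * (m choose s) :: nat)"
proof -
  have "(3::nat) \<le> 3^m"
    using assms by (metis power_one_right power_increasing zero_less_numeral one_le_numeral)
  with sum_pow2_binomial[of m] show ?thesis
    by linarith
qed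

lemma dV1_closed_form:
  assumes "1 \<le> k"
  shows "dV1 n k = (3^k - 3) div 2 + 2^(k-1) * (3^(n-k) - 1)"
proof -
  define A where "A = (\<Sum>s=1..k. 2^(s-1) * (k choose s))"
  define B where "B = (\<Sum>t=1..n-k. 2^(t-1) * ((n-k) choose t))"
  have A_pos: "1 \<le> A"
    unfolding A_def using sum_pow2_binomial_pos[OF assms] .
  have "(\<Sum>t=1..n-k. 2^(k+t-1) * ((n-k) choose t)) = 2^k * B"
    unfolding B_def sum_distrib_left
    by (rule sum.cong) (auto simp: power_add[symmetric] mult.assoc)
  also have "\<dots> = 2 * 2^(k-1) * B"
    using assms by (cases k) auto
  finally have "dV1 n k = A - 1 + 2^(k-1) * (2 * B)"
    unfolding dV1_def A_def by simp
  moreover have "(3::nat)^k - 3 = 2 * (A - 1)" "(3::nat)^(n-k) - 1 = 2 * B"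
    using sum_pow2_binomial[of k] sum_pow2_binomial[of "n-k"] A_pos
    unfolding A_def B_def by simp_all
  ultimately show ?thesis by simp
qed

lemma sum_nonempty_subsets_by_card:
  assumes "finite A"
  shows "(\<Sum>T | T \<subseteq> A \<and> T \<noteq> {}. g (card T)) = (\<Sum>s=1..card A. g s * (card A choose s))"
proof -
  have "card ` {T. T \<subseteq> A \<and> T \<noteq> {}} \<subseteq> {1..card A}"
    using assms by (auto simp: card_mono Suc_le_eq card_gt_0_iff dest: finite_subset)
  then have "(\<Sum>T | T \<subseteq> A \<and> T \<noteq> {}. g (card T))
      = (\<Sum>s=1..card A. \<Sum>T | (T \<subseteq> A \<and> T \<noteq> {}) \<and> card T = s. g (card T))"
    using assms by (subst sum.group[symmetric]) auto
  also have "\<dots> = (\<Sum>s=1..card A. g s * (card A choose s))"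
  proof (rule sum.cong[OF refl])
    fix s assume "s \<in> {1..card A}"
    then have "{T. (T \<subseteq> A \<and> T \<noteq> {}) \<and> card T = s} = {T. T \<subseteq> A \<and> card T = s}"
      by auto
    then show "(\<Sum>T | (T \<subseteq> A \<and> T \<noteq> {}) \<and> card T = s. g (card T)) = g s * (card A choose s)"
      using n_subsets[OF assms, of s] by (simp add: mult.commute)
  qed
  finally show ?thesis .
qed

lemma sum_subsets_comparable:
  assumes "finite P" "X \<subseteq> P" "X \<noteq> {}"
  shows "(\<Sum>T | T \<subseteq> P \<and> T \<noteq> {} \<and> (X \<subseteq> T \<or> T \<subseteq> X). g T)
       = (\<Sum>T | T \<subseteq> X \<and> T \<noteq> {}. g T) + (\<Sum>U | U \<subseteq> P - X \<and> U \<noteq> {}. g (X \<union> U))"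
proof -
  have "{T. T \<subseteq> P \<and> T \<noteq> {} \<and> (X \<subseteq> T \<or> T \<subseteq> X)}
      = {T. T \<subseteq> X \<and> T \<noteq> {}} \<union> (\<union>) X ` {U. U \<subseteq> P - X \<and> U \<noteq> {}}"
  proof (intro equalityI subsetI)
    fix T assume "T \<in> {T. T \<subseteq> P \<and> T \<noteq> {} \<and> (X \<subseteq> T \<or> T \<subseteq> X)}"
    then show "T \<in> {T. T \<subseteq> X \<and> T \<noteq> {}} \<union> (\<union>) X ` {U. U \<subseteq> P - X \<and> U \<noteq> {}}"
      by (cases "T \<subseteq> X") (auto intro!: image_eqI[of _ _ "T - X"])
  qed (use assms in auto)
  moreover have "inj_on ((\<union>) X) {U. U \<subseteq> P - X \<and> U \<noteq> {}}"
    by (rule inj_onI) blast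
  moreover have "{T. T \<subseteq> X \<and> T \<noteq> {}} \<inter> (\<union>) X ` {U. U \<subseteq> P - X \<and> U \<noteq> {}} = {}"
    by auto
  ultimately show ?thesis
    using assms by (simp add: sum.union_disjoint sum.reindex finite_subset)
qed

lemma card_supersets_of_card:
  assumes "finite P" "D \<subseteq> P" "card D \<le> k"
  shows "card {X. X \<subseteq> P \<and> card X = k \<and> D \<subseteq> X} = (card P - card D) choose (k - card D)"
proof -
  have "bij_betw ((\<union>) D) {U. U \<subseteq> P - D \<and> card U = k - card D} {X. X \<subseteq> P \<and> card X = k \<and> D \<subseteq> X}"
  proof (rule bij_betw_byWitness[where f' = "\<lambda>X. X - D"])
    show "(\<union>) D ` {U. U \<subseteq> P - D \<and> card U = k - card D} \<subseteq> {X. X \<subseteq> P \<and> card X = k \<and> D \<subseteq> X}"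
    proof (intro subsetI, elim imageE CollectE conjE)
      fix U X assume "U \<subseteq> P - D" "card U = k - card D" "X = D \<union> U"
      moreover have "card (D \<union> U) = card D + card U"
        using assms \<open>U \<subseteq> P - D\<close> by (intro card_Un_disjoint) (auto intro: finite_subset)
      ultimately show "X \<in> {X. X \<subseteq> P \<and> card X = k \<and> D \<subseteq> X}"
        using assms by auto
    qed
    show "(\<lambda>X. X - D) ` {X. X \<subseteq> P \<and> card X = k \<and> D \<subseteq> X} \<subseteq> {U. U \<subseteq> P - D \<and> card U = k - card D}"
      using assms by (auto simp: card_Diff_subset finite_subset)
  qed auto
  then show ?thesis
    using assms by (simp add: bij_betw_same_card[symmetric] n_subsets card_Diff_subset finite_subset)
qed

lemma image_mset_mset_set_by_fibres:
  assumes "finite A" "finite I" "g ` A \<subseteq> I" "\<And>a. a \<in> A \<Longrightarrow> f a = c (g a)"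
  shows "image_mset f (mset_set A) = (\<Sum>i\<in>I. replicate_mset (card {a\<in>A. g a = i}) (c i))"
proof -
  have "image_mset g (mset_set A) = (\<Sum>i\<in>I. replicate_mset (card {a\<in>A. g a = i}) i)"
  proof (rule multiset_eqI)
    fix j
    have "count (image_mset g (mset_set A)) j = card {a\<in>A. g a = j}"
      using assms(1) by (simp add: count_image_mset Int_commute vimage_def Collect_conj_eq)
    also have "\<dots> = count (\<Sum>i\<in>I. replicate_mset (card {a\<in>A. g a = i}) i) j"
    proof (cases "j \<in> I")
      case False
      then have no_fibre: "{a\<in>A. g a = j} = {}"
        using assms(3) by blast
      from False assms(2) show ?thesis
        by (simp add: count_sum count_replicate_mset no_fibre)
    qed (use assms(2) in \<open>simp add: count_sum count_replicate_mset\<close>)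
    finally show "count (image_mset g (mset_set A)) j
        = count (\<Sum>i\<in>I. replicate_mset (card {a\<in>A. g a = i}) i) j" .
  qed
  moreover have "image_mset f (mset_set A) = image_mset c (image_mset g (mset_set A))"
    using assms(1,4) by (simp add: multiset.map_comp o_def) (rule image_mset_cong, simp)
  moreover have "image_mset c (\<Sum>i\<in>I. h i) = (\<Sum>i\<in>I. image_mset c (h i))" for h
    by (rule sum_comp_morphism[symmetric, unfolded o_def]) simp_all
  ultimately show ?thesis
    by simp
qed


section \<open>Signed sets\<close>

definition sign_flip :: "'a::ab_group_add set \<Rightarrow> 'a set \<Rightarrow> 'a set" where
  "sign_flip T N = (T - N) \<union> uminus ` N"

lemma abs_image_pos:
  fixes A :: "'a::linordered_idom set"
  assumes "\<And>a. a \<in> A \<Longrightarrow> 0 < a"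
  shows "abs ` A = A"
proof -
  have "abs ` A = id ` A"
    by (rule image_cong) (simp_all add: assms abs_of_pos)
  then show ?thesis
    by simp
qed

lemma abs_sign_flip:
  fixes T :: "'a::linordered_idom set"
  assumes "\<And>t. t \<in> T \<Longrightarrow> 0 < t" "N \<subseteq> T"
  shows "abs ` sign_flip T N = T"
proof -
  have "abs ` sign_flip T N = abs ` (T - N) \<union> abs ` N"
    unfolding sign_flip_def by (simp add: image_Un image_image)
  also have "\<dots> = T"
    using assms abs_image_pos[of "T - N"] abs_image_pos[of N] by blast
  finally show ?thesis .
qed

lemma negated_part_sign_flip:
  fixes T :: "'a::linordered_idom set"
  assumes "\<And>t. t \<in> T \<Longrightarrow> 0 < t" "N \<subseteq> T"
  shows "{t\<in>T. - t \<in> sign_flip T N} = N"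
proof -
  have "- t \<notin> T" if "t \<in> T" for t
    using assms(1)[of t] assms(1)[of "- t"] that by auto
  then show ?thesis
    using assms(2) unfolding sign_flip_def by auto
qed

lemma inj_on_abs_sign_flip:
  fixes T :: "'a::linordered_idom set"
  assumes "\<And>t. t \<in> T \<Longrightarrow> 0 < t" "N \<subseteq> T"
  shows "inj_on abs (sign_flip T N)"
proof (rule inj_onI)
  fix a b assume ab: "a \<in> sign_flip T N" "b \<in> sign_flip T N" "\<bar>a\<bar> = \<bar>b\<bar>"
  have sign: "c \<in> T - N \<and> 0 < c \<or> - c \<in> N \<and> c < 0" if "c \<in> sign_flip T N" for c
    using that assms unfolding sign_flip_def by force
  from sign[OF ab(1)] sign[OF ab(2)] ab(3) show "a = b"
    by (auto simp: abs_if split: if_splits)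
qed

lemma inj_on_sign_flip:
  fixes T :: "'a::linordered_idom set"
  assumes "\<And>t. t \<in> T \<Longrightarrow> 0 < t"
  shows "inj_on (sign_flip T) (Pow T)"
  by (rule inj_on_inverseI[where g = "\<lambda>S. {t\<in>T. - t \<in> S}"])
    (use negated_part_sign_flip[OF assms] in blast)

lemma max_abs_sign_flip_pos:
  fixes T :: "'a::linordered_idom set"
  assumes fin: "finite T" and pos: "\<And>t. t \<in> T \<Longrightarrow> 0 < t" and N: "N \<subseteq> T - {Max T}"
    and a: "a \<in> sign_flip T N" "\<forall>b\<in>sign_flip T N. \<bar>b\<bar> \<le> \<bar>a\<bar>"
  shows "0 < a"
proof -
  have "T \<noteq> {}"
    using a(1) N unfolding sign_flip_def by blast
  then have Max_T: "Max T \<in> T" "\<And>t. t \<in> T \<Longrightarrow> t \<le> Max T"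
    using fin by simp_all
  have "Max T \<in> sign_flip T N"
    using Max_T(1) N unfolding sign_flip_def by blast
  moreover have "- Max T \<notin> sign_flip T N"
  proof
    assume "- Max T \<in> sign_flip T N"
    moreover have "- Max T \<notin> T"
      using pos[OF Max_T(1)] pos[of "- Max T"] by force
    ultimately have "Max T \<in> N"
      unfolding sign_flip_def by auto
    with N show False
      by blast
  qed
  moreover have "\<bar>a\<bar> \<le> Max T"
    using a(1) abs_sign_flip[OF pos] N Max_T(2) by blast
  moreover have "Max T \<le> \<bar>a\<bar>"
    using a(2) \<open>Max T \<in> sign_flip T N\<close> pos[OF Max_T(1)] by fastforce
  ultimately show ?thesis
    using a(1) pos[OF Max_T(1)] by (cases "0 < a") (auto simp: abs_if split: if_splits)
qed

locale positive_ground_set =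
  fixes P :: "'a::linordered_idom set"
  assumes finite_ground: "finite P"
    and ground_pos: "\<And>p. p \<in> P \<Longrightarrow> 0 < p"
begin

text \<open>With \<open>P\<close> in the role of \<open>\<B>\<^sub>n\<^sup>+\<close>, the set \<open>P \<union> uminus ` (P - {Max P})\<close> is \<open>\<B>\<^sub>n\<close>
and \<open>signed_sets\<close> is \<open>\<phi>(\<B>\<^sub>n)\<close>.\<close>

definition signed_sets :: "'a set set" where
  "signed_sets = {S. S \<noteq> {} \<and> S \<subseteq> P \<union> uminus ` (P - {Max P}) \<and> inj_on abs S \<and>
                     (\<forall>a\<in>S. (\<forall>b\<in>S. \<bar>b\<bar> \<le> \<bar>a\<bar>) \<longrightarrow> 0 < a)}"

lemma finite_signed_sets: "finite signed_sets"
proof -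
  have "signed_sets \<subseteq> Pow (P \<union> uminus ` (P - {Max P}))"
    unfolding signed_sets_def by auto
  then show ?thesis
    using finite_ground by (auto intro: finite_subset)
qed

lemma abs_signed_set_subset:
  assumes "S \<in> signed_sets"
  shows "abs ` S \<subseteq> P"
proof
  fix t assume "t \<in> abs ` S"
  then obtain a where "a \<in> S" "t = \<bar>a\<bar>"
    by blast
  moreover have "a \<in> P \<or> - a \<in> P"
    using assms \<open>a \<in> S\<close> unfolding signed_sets_def by auto
  ultimately show "t \<in> P"
    using ground_pos by (metis abs_minus_cancel abs_of_pos)
qed

lemma card_abs_signed_set: "S \<in> signed_sets \<Longrightarrow> card (abs ` S) = card S"
  unfolding signed_sets_def by (simp add: card_image)

lemma sign_flip_in_signed_sets:
  assumes T: "T \<subseteq> P" "T \<noteq> {}" and N: "N \<subseteq> T - {Max T}"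
  shows "sign_flip T N \<in> signed_sets"
proof -
  have fin: "finite T" and pos: "\<And>t. t \<in> T \<Longrightarrow> 0 < t"
    using T finite_ground ground_pos finite_subset by auto
  let ?S = "sign_flip T N"
  have "Max T = Max P" if "Max P \<in> T"
    using that T fin finite_ground by (meson Max_ge Max_in antisym subsetD)
  then have "?S \<subseteq> P \<union> uminus ` (P - {Max P})"
    using T N unfolding sign_flip_def by force
  moreover have "inj_on abs ?S"
    using inj_on_abs_sign_flip[OF pos] N by blast
  moreover have "Max T \<in> ?S"
    using Max_in[OF fin T(2)] N unfolding sign_flip_def by blast
  moreover have "0 < a" if "a \<in> ?S" "\<forall>b\<in>?S. \<bar>b\<bar> \<le> \<bar>a\<bar>" for a
    using fin pos N that by (rule max_abs_sign_flip_pos)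
  ultimately show ?thesis
    unfolding signed_sets_def by blast
qed

lemma minus_notin_signed_set:
  assumes S: "S \<in> signed_sets" and a: "a \<in> S" "0 < a"
  shows "- a \<notin> S"
proof
  assume "- a \<in> S"
  moreover have "inj_on abs S"
    using S unfolding signed_sets_def by blast
  ultimately have "a = - a"
    using inj_onD[of abs S a "- a"] a(1) by simp
  with a(2) show False
    by simp
qed

lemma minus_Max_abs_notin_signed_set:
  assumes S: "S \<in> signed_sets"
  shows "- Max (abs ` S) \<notin> S"
proof
  let ?M = "Max (abs ` S)"
  assume neg: "- ?M \<in> S"
  have fin: "finite (abs ` S)" "abs ` S \<noteq> {}"
    using S finite_ground finite_subset abs_signed_set_subset[OF S]
    unfolding signed_sets_def by auto
  have M_pos: "0 < ?M"
    using ground_pos abs_signed_set_subset[OF S] Max_in[OF fin] by blast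
  have "\<bar>b\<bar> \<le> \<bar>- ?M\<bar>" if "b \<in> S" for b
    using Max_ge[OF fin(1), of "\<bar>b\<bar>"] that M_pos by simp
  with neg have "0 < - ?M"
    using S unfolding signed_sets_def by blast
  with M_pos show False
    by simp
qed

lemma signed_set_eq_sign_flip:
  assumes S: "S \<in> signed_sets"
  shows "S = sign_flip (abs ` S) {t \<in> abs ` S. - t \<in> S}"
proof (intro equalityI subsetI)
  fix a assume a: "a \<in> S"
  show "a \<in> sign_flip (abs ` S) {t \<in> abs ` S. - t \<in> S}"
  proof (cases "0 < a")
    case True
    then have "a \<in> abs ` S"
      using a by (metis abs_of_pos image_eqI)
    with minus_notin_signed_set[OF S a True] show ?thesis
      unfolding sign_flip_def by blast
  next
    case False
    then have a_eq: "a = - \<bar>a\<bar>"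
      by simp
    with a have "\<bar>a\<bar> \<in> {t \<in> abs ` S. - t \<in> S}"
      by (metis (mono_tags, lifting) image_eqI mem_Collect_eq)
    then show ?thesis
      unfolding sign_flip_def by (subst a_eq) blast
  qed
next
  fix a assume "a \<in> sign_flip (abs ` S) {t \<in> abs ` S. - t \<in> S}"
  then consider "a \<in> abs ` S" "- a \<notin> S" | t where "- t \<in> S" "a = - t"
    unfolding sign_flip_def by blast
  then show "a \<in> S"
  proof cases
    case 1
    then obtain b where "b \<in> S" "a = \<bar>b\<bar>"
      by blast
    with 1(2) show ?thesis
      by (cases "0 \<le> b") auto
  qed simp
qed

lemma signed_sets_fibre:
  assumes "T \<subseteq> P" "T \<noteq> {}"
  shows "{S\<in>signed_sets. abs ` S = T} = sign_flip T ` Pow (T - {Max T})"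
proof (intro equalityI subsetI)
  fix S assume "S \<in> {S\<in>signed_sets. abs ` S = T}"
  then have S: "S \<in> signed_sets" and T: "abs ` S = T"
    by simp_all
  show "S \<in> sign_flip T ` Pow (T - {Max T})"
    using signed_set_eq_sign_flip[OF S] minus_Max_abs_notin_signed_set[OF S]
    unfolding T by (intro image_eqI) auto
next
  fix S assume "S \<in> sign_flip T ` Pow (T - {Max T})"
  then obtain N where N: "N \<subseteq> T - {Max T}" and S: "S = sign_flip T N"
    by blast
  have "\<And>t. t \<in> T \<Longrightarrow> 0 < t"
    using assms ground_pos by blast
  with N have "abs ` S = T"
    unfolding S by (intro abs_sign_flip) auto
  moreover have "S \<in> signed_sets"
    unfolding S using assms N by (rule sign_flip_in_signed_sets)
  ultimately show "S \<in> {S\<in>signed_sets. abs ` S = T}"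
    by simp
qed

lemma card_signed_sets_fibre:
  assumes "T \<subseteq> P" "T \<noteq> {}"
  shows "card {S\<in>signed_sets. abs ` S = T} = 2 ^ (card T - 1)"
proof -
  have "finite T"
    using assms finite_ground finite_subset by auto
  moreover have "inj_on (sign_flip T) (Pow (T - {Max T}))"
    using inj_on_sign_flip[of T] assms ground_pos by (blast intro: inj_on_subset)
  ultimately show ?thesis
    unfolding signed_sets_fibre[OF assms] using assms
    by (simp add: card_image card_Pow)
qed

lemma card_signed_sets_by_abs:
  "card {S\<in>signed_sets. Q (abs ` S)} = (\<Sum>T | T \<subseteq> P \<and> T \<noteq> {} \<and> Q T. 2 ^ (card T - 1))"
proof -
  have "{S\<in>signed_sets. Q (abs ` S)}
      = (\<Union>T\<in>{T. T \<subseteq> P \<and> T \<noteq> {} \<and> Q T}. {S\<in>signed_sets. abs ` S = T})"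
  proof (intro equalityI subsetI)
    fix S assume "S \<in> {S\<in>signed_sets. Q (abs ` S)}"
    moreover have "S \<noteq> {}" if "S \<in> signed_sets"
      using that unfolding signed_sets_def by blast
    ultimately show "S \<in> (\<Union>T\<in>{T. T \<subseteq> P \<and> T \<noteq> {} \<and> Q T}. {S\<in>signed_sets. abs ` S = T})"
      using abs_signed_set_subset by blast
  qed blast
  also have "card \<dots> = (\<Sum>T | T \<subseteq> P \<and> T \<noteq> {} \<and> Q T. card {S\<in>signed_sets. abs ` S = T})"
  proof (rule card_UN_disjoint)
    show "finite {T. T \<subseteq> P \<and> T \<noteq> {} \<and> Q T}"
      using finite_ground by simp
  qed (use finite_signed_sets in auto)
  also have "\<dots> = (\<Sum>T | T \<subseteq> P \<and> T \<noteq> {} \<and> Q T. 2 ^ (card T - 1))"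
    by (rule sum.cong) (simp_all add: card_signed_sets_fibre)
  finally show ?thesis .
qed

lemma card_signed_sets_of_card:
  assumes "1 \<le> r"
  shows "card {S\<in>signed_sets. card S = r} = 2 ^ (r - 1) * (card P choose r)"
proof -
  have "{S\<in>signed_sets. card S = r} = {S\<in>signed_sets. card (abs ` S) = r}"
    using card_abs_signed_set by auto
  moreover have "{T. T \<subseteq> P \<and> T \<noteq> {} \<and> card T = r} = {T. T \<subseteq> P \<and> card T = r}"
    using assms by auto
  ultimately have "card {S\<in>signed_sets. card S = r} = (\<Sum>T | T \<subseteq> P \<and> card T = r. 2 ^ (card T - 1))"
    using card_signed_sets_by_abs[of "\<lambda>T. card T = r"] by simp
  also have "\<dots> = (\<Sum>T | T \<subseteq> P \<and> card T = r. 2 ^ (r - 1))"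
    by (rule sum.cong) auto
  also have "\<dots> = 2 ^ (r - 1) * (card P choose r)"
    using n_subsets[OF finite_ground, of r] by simp
  finally show ?thesis .
qed

end

section \<open>The bipartite Kneser graph of type B\<close>

locale kneser_B_graph = positive_ground_set +
  fixes k :: nat
  assumes k_pos: "1 \<le> k" and k_less_card: "k < card P"
begin

text \<open>\<open>k_subsets\<close> and \<open>other_signed_sets\<close> are \<open>V\<^sub>1\<close> and \<open>V\<^sub>2\<close>; \<open>abs `\<close> plays the role of \<open>\<dagger>\<close>.\<close>

definition k_subsets :: "'a set set" where
  "k_subsets = {X. X \<subseteq> P \<and> card X = k}"

definition other_signed_sets :: "'a set set" where
  "other_signed_sets = signed_sets - k_subsets"

definition adjacent :: "'a set \<Rightarrow> 'a set \<Rightarrow> bool" where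
  "adjacent A B \<longleftrightarrow>
     (A \<in> k_subsets \<and> B \<in> other_signed_sets \<and> (A \<subseteq> abs ` B \<or> abs ` B \<subseteq> A)) \<or>
     (B \<in> k_subsets \<and> A \<in> other_signed_sets \<and> (B \<subseteq> abs ` A \<or> abs ` A \<subseteq> B))"

definition degree :: "'a set \<Rightarrow> nat" where
  "degree A = card {B \<in> k_subsets \<union> other_signed_sets. adjacent A B}"

lemma abs_subset_ground: "X \<subseteq> P \<Longrightarrow> abs ` X = X"
  by (rule abs_image_pos) (use ground_pos in blast)

lemma finite_k_subsets: "finite k_subsets"
  unfolding k_subsets_def using finite_ground by simp

lemma card_k_subsets: "card k_subsets = card P choose k"
  unfolding k_subsets_def by (rule n_subsets[OF finite_ground])

lemma k_subsets_subset_signed_sets: "k_subsets \<subseteq> signed_sets"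
proof
  fix X assume "X \<in> k_subsets"
  then have X: "X \<subseteq> P" "card X = k"
    unfolding k_subsets_def by simp_all
  have pos: "\<And>a. a \<in> X \<Longrightarrow> 0 < a"
    using X(1) ground_pos by blast
  have "X \<noteq> {}"
    using X k_pos by auto
  moreover have "inj_on abs X"
    using pos by (intro inj_onI) (simp add: abs_of_pos)
  ultimately show "X \<in> signed_sets"
    unfolding signed_sets_def mem_Collect_eq using X(1) pos by (intro conjI) blast+
qed

lemma neighbours_k_subset:
  assumes X: "X \<in> k_subsets"
  shows "{B \<in> k_subsets \<union> other_signed_sets. adjacent X B}
       = {S\<in>signed_sets. X \<subseteq> abs ` S \<or> abs ` S \<subseteq> X} - {X}"
    (is "_ = ?comparable - {X}")
proof (intro equalityI subsetI)
  fix B assume "B \<in> {B \<in> k_subsets \<union> other_signed_sets. adjacent X B}"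
  then show "B \<in> ?comparable - {X}"
    using X unfolding adjacent_def other_signed_sets_def by auto
next
  fix B assume B: "B \<in> ?comparable - {X}"
  have "B \<notin> k_subsets"
  proof
    assume "B \<in> k_subsets"
    then have "B \<subseteq> P" "finite B" "card B = card X"
      using X finite_ground finite_subset unfolding k_subsets_def by auto
    moreover have "finite X"
      using X finite_ground finite_subset unfolding k_subsets_def by auto
    ultimately have "B = X"
      using B abs_subset_ground card_subset_eq by (metis (lifting) DiffE mem_Collect_eq)
    with B show False
      by blast
  qed
  with B show "B \<in> {B \<in> k_subsets \<union> other_signed_sets. adjacent X B}"
    using X unfolding adjacent_def other_signed_sets_def by auto
qed

lemma degree_k_subset:
  assumes X: "X \<in> k_subsets"
  shows "degree X = dV1 (card P) k"
proof -
  have XP: "X \<subseteq> P" and card_X: "card X = k"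
    using X unfolding k_subsets_def by simp_all
  have fin_X: "finite X" and X_ne: "X \<noteq> {}"
    using XP card_X k_pos finite_ground finite_subset by auto
  let ?comparable = "{S\<in>signed_sets. X \<subseteq> abs ` S \<or> abs ` S \<subseteq> X}"
  have "X \<in> ?comparable"
    using X k_subsets_subset_signed_sets abs_subset_ground[OF XP] by auto
  then have "degree X = card ?comparable - 1"
    unfolding degree_def neighbours_k_subset[OF X] using finite_signed_sets by simp
  also have "card ?comparable
      = (\<Sum>T | T \<subseteq> P \<and> T \<noteq> {} \<and> (X \<subseteq> T \<or> T \<subseteq> X). 2 ^ (card T - 1))"
    by (rule card_signed_sets_by_abs)
  also have "\<dots> = (\<Sum>T | T \<subseteq> X \<and> T \<noteq> {}. 2 ^ (card T - 1))
                 + (\<Sum>U | U \<subseteq> P - X \<and> U \<noteq> {}. 2 ^ (card (X \<union> U) - 1))"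
    using finite_ground XP X_ne by (rule sum_subsets_comparable)
  also have "(\<Sum>U | U \<subseteq> P - X \<and> U \<noteq> {}. 2 ^ (card (X \<union> U) - 1))
           = (\<Sum>U | U \<subseteq> P - X \<and> U \<noteq> {}. 2 ^ (k + card U - 1) :: nat)"
  proof (rule sum.cong[OF refl])
    fix U assume "U \<in> {U. U \<subseteq> P - X \<and> U \<noteq> {}}"
    then have "card (X \<union> U) = k + card U"
      using fin_X card_X finite_ground by (subst card_Un_disjoint) (auto intro: finite_subset)
    then show "2 ^ (card (X \<union> U) - 1) = (2::nat) ^ (k + card U - 1)"
      by simp
  qed
  also have "(\<Sum>T | T \<subseteq> X \<and> T \<noteq> {}. 2 ^ (card T - 1)) = (\<Sum>s=1..k. 2^(s-1) * (k choose s))"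
    using sum_nonempty_subsets_by_card[OF fin_X, of "\<lambda>s. 2 ^ (s - 1)"] card_X by simp
  also have "(\<Sum>U | U \<subseteq> P - X \<and> U \<noteq> {}. 2 ^ (k + card U - 1))
           = (\<Sum>t=1..card P - k. 2^(k+t-1) * ((card P - k) choose t))"
    using sum_nonempty_subsets_by_card[of "P - X" "\<lambda>t. 2 ^ (k + t - 1)"] finite_ground
      card_Diff_subset[OF fin_X XP] card_X by simp
  finally show ?thesis
    unfolding dV1_def using sum_pow2_binomial_pos[OF k_pos] by linarith
qed

lemma degree_other_signed_set:
  assumes "Y \<in> other_signed_sets"
  shows "degree Y = card {X. X \<subseteq> P \<and> card X = k \<and> (X \<subseteq> abs ` Y \<or> abs ` Y \<subseteq> X)}"
proof -
  have "Y \<notin> k_subsets"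
    using assms unfolding other_signed_sets_def by blast
  then have "{B \<in> k_subsets \<union> other_signed_sets. adjacent Y B}
      = {X. X \<subseteq> P \<and> card X = k \<and> (X \<subseteq> abs ` Y \<or> abs ` Y \<subseteq> X)}"
    using assms unfolding adjacent_def k_subsets_def by blast
  then show ?thesis
    unfolding degree_def by simp
qed

lemma other_signed_set_abs:
  assumes "Y \<in> other_signed_sets"
  shows "abs ` Y \<subseteq> P" and "card (abs ` Y) = card Y" and "finite (abs ` Y)"
proof -
  have Y: "Y \<in> signed_sets"
    using assms unfolding other_signed_sets_def by blast
  show "abs ` Y \<subseteq> P"
    by (rule abs_signed_set_subset[OF Y])
  show "card (abs ` Y) = card Y"
    by (rule card_abs_signed_set[OF Y])
  show "finite (abs ` Y)"
    using abs_signed_set_subset[OF Y] finite_ground by (rule finite_subset)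
qed

lemma degree_other_signed_set_less:
  assumes Y: "Y \<in> other_signed_sets" and less: "card Y < k"
  shows "degree Y = (card P - card Y) choose (k - card Y)"
proof -
  let ?D = "abs ` Y"
  note D = other_signed_set_abs[OF Y]
  have "\<not> X \<subseteq> ?D" if "card X = k" for X
    using card_mono[OF D(3), of X] D(2) less that by linarith
  then have "{X. X \<subseteq> P \<and> card X = k \<and> (X \<subseteq> ?D \<or> ?D \<subseteq> X)}
      = {X. X \<subseteq> P \<and> card X = k \<and> ?D \<subseteq> X}"
    by blast
  then show ?thesis
    using degree_other_signed_set[OF Y] card_supersets_of_card[OF finite_ground D(1)] D(2) less
    by simp
qed

lemma degree_other_signed_set_eq:
  assumes Y: "Y \<in> other_signed_sets" and eq: "card Y = k"
  shows "degree Y = 1"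
proof -
  let ?D = "abs ` Y"
  note D = other_signed_set_abs[OF Y]
  have "X = ?D" if X: "X \<subseteq> P" "card X = k" "X \<subseteq> ?D \<or> ?D \<subseteq> X" for X
  proof -
    have "finite X"
      using X(1) finite_ground by (rule finite_subset)
    with X D eq show ?thesis
      by (metis card_subset_eq)
  qed
  then have "{X. X \<subseteq> P \<and> card X = k \<and> (X \<subseteq> ?D \<or> ?D \<subseteq> X)} = {?D}"
    using D eq by auto
  then show ?thesis
    using degree_other_signed_set[OF Y] by simp
qed

lemma degree_other_signed_set_greater:
  assumes Y: "Y \<in> other_signed_sets" and greater: "k < card Y"
  shows "degree Y = card Y choose k"
proof -
  let ?D = "abs ` Y"
  note D = other_signed_set_abs[OF Y]
  have "\<not> ?D \<subseteq> X" if "X \<subseteq> P" "card X = k" for X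
    using card_mono[OF finite_subset[OF that(1) finite_ground], of ?D] D(2) greater that
    by linarith
  with D(1) have "{X. X \<subseteq> P \<and> card X = k \<and> (X \<subseteq> ?D \<or> ?D \<subseteq> X)}
      = {X. X \<subseteq> ?D \<and> card X = k}"
    by blast
  then show ?thesis
    using degree_other_signed_set[OF Y] n_subsets[OF D(3), of k] D(2) by simp
qed

lemma card_other_signed_sets_of_card:
  assumes "1 \<le> r" "r \<noteq> k"
  shows "card {Y\<in>other_signed_sets. card Y = r} = 2 ^ (r - 1) * (card P choose r)"
proof -
  have "{Y\<in>other_signed_sets. card Y = r} = {S\<in>signed_sets. card S = r}"
    using assms unfolding other_signed_sets_def k_subsets_def by auto
  then show ?thesis
    using card_signed_sets_of_card[OF assms(1)] by simp
qed

lemma card_other_signed_sets_of_card_k: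
  "card {Y\<in>other_signed_sets. card Y = k} = (2 ^ (k - 1) - 1) * (card P choose k)"
proof -
  have "{Y\<in>other_signed_sets. card Y = k} = {S\<in>signed_sets. card S = k} - k_subsets"
    unfolding other_signed_sets_def by blast
  moreover have "k_subsets \<subseteq> {S\<in>signed_sets. card S = k}"
    using k_subsets_subset_signed_sets unfolding k_subsets_def by blast
  ultimately have "card {Y\<in>other_signed_sets. card Y = k} = card {S\<in>signed_sets. card S = k} - card k_subsets"
    using finite_k_subsets by (simp add: card_Diff_subset)
  also have "\<dots> = (2 ^ (k - 1) - 1) * (card P choose k)"
    using card_signed_sets_of_card[OF k_pos] card_k_subsets by (simp add: diff_mult_distrib)
  finally show ?thesis .
qed

lemma card_other_signed_set_range:
  assumes "Y \<in> other_signed_sets"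
  shows "card Y \<in> {1..card P}"
proof -
  note D = other_signed_set_abs[OF assms]
  have "abs ` Y \<noteq> {}"
    using assms unfolding other_signed_sets_def signed_sets_def by blast
  then have "1 \<le> card (abs ` Y)"
    using D(3) by (simp add: Suc_le_eq card_gt_0_iff)
  moreover have "card (abs ` Y) \<le> card P"
    using card_mono[OF finite_ground D(1)] .
  ultimately show ?thesis
    using D(2) by simp
qed

lemma finite_other_signed_sets: "finite other_signed_sets"
  using finite_signed_sets unfolding other_signed_sets_def by simp

lemma degree_multiset_other_signed_sets:
  "image_mset degree (mset_set other_signed_sets)
     = (\<Sum>r\<in>{1..<k}. replicate_mset (2^(r-1) * (card P choose r)) ((card P - r) choose (k - r)))
       + replicate_mset ((2^(k-1) - 1) * (card P choose k)) 1
       + (\<Sum>r\<in>{k<..card P}. replicate_mset (2^(r-1) * (card P choose r)) (r choose k))"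
proof -
  define c where "c r = (if r < k then (card P - r) choose (k - r) else if r = k then 1 else r choose k)"
    for r
  define m where "m r = card {Y\<in>other_signed_sets. card Y = r}" for r
  have "image_mset degree (mset_set other_signed_sets) = (\<Sum>r\<in>{1..card P}. replicate_mset (m r) (c r))"
    unfolding m_def
  proof (rule image_mset_mset_set_by_fibres)
    show "card ` other_signed_sets \<subseteq> {1..card P}"
      using card_other_signed_set_range by blast
    show "degree Y = c (card Y)" if "Y \<in> other_signed_sets" for Y
      using degree_other_signed_set_less[OF that] degree_other_signed_set_eq[OF that]
        degree_other_signed_set_greater[OF that] unfolding c_def by simp
  qed (use finite_other_signed_sets in simp_all)
  also have "\<dots> = (\<Sum>r\<in>{1..<k}. replicate_mset (m r) (c r))
      + (replicate_mset (m k) (c k) + (\<Sum>r\<in>{k<..card P}. replicate_mset (m r) (c r)))"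
  proof -
    have "{1..card P} = {1..<k} \<union> insert k {k<..card P}"
      using k_pos k_less_card by auto
    then show ?thesis
      by (simp only:) (subst sum.union_disjoint; auto)
  qed
  also have "(\<Sum>r\<in>{1..<k}. replicate_mset (m r) (c r))
      = (\<Sum>r\<in>{1..<k}. replicate_mset (2^(r-1) * (card P choose r)) ((card P - r) choose (k - r)))"
    by (rule sum.cong) (simp_all add: m_def c_def card_other_signed_sets_of_card)
  also have "(\<Sum>r\<in>{k<..card P}. replicate_mset (m r) (c r))
      = (\<Sum>r\<in>{k<..card P}. replicate_mset (2^(r-1) * (card P choose r)) (r choose k))"
    using k_pos by (intro sum.cong) (simp_all add: m_def c_def card_other_signed_sets_of_card)
  finally show ?thesis
    by (simp add: m_def c_def card_other_signed_sets_of_card_k add.assoc)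
qed

lemma degree_multiset:
  "image_mset degree (mset_set (k_subsets \<union> other_signed_sets))
     = replicate_mset (card P choose k) (dV1 (card P) k)
       + (\<Sum>r\<in>{1..<k}. replicate_mset (2^(r-1) * (card P choose r)) ((card P - r) choose (k - r)))
       + replicate_mset ((2^(k-1) - 1) * (card P choose k)) 1
       + (\<Sum>r\<in>{k<..card P}. replicate_mset (2^(r-1) * (card P choose r)) (r choose k))"
proof -
  have "image_mset degree (mset_set k_subsets) = image_mset (\<lambda>_. dV1 (card P) k) (mset_set k_subsets)"
    using degree_k_subset finite_k_subsets by (intro image_mset_cong) simp
  then have "image_mset degree (mset_set k_subsets) = replicate_mset (card P choose k) (dV1 (card P) k)"
    using card_k_subsets by (simp add: image_mset_const_eq)
  moreover have "mset_set (k_subsets \<union> other_signed_sets) = mset_set k_subsets + mset_set other_signed_sets"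
    using finite_k_subsets finite_other_signed_sets
    by (intro mset_set_Union) (auto simp: other_signed_sets_def)
  ultimately show ?thesis
    using degree_multiset_other_signed_sets by (simp add: add.assoc)
qed

end

lemma Bpos_ground_set:
  fixes x :: "nat \<Rightarrow> real"
  assumes n: "1 \<le> n"
    and pos: "\<And>i. 1 \<le> i \<Longrightarrow> i \<le> n \<Longrightarrow> x i > 0"
    and incr: "\<And>i j. 1 \<le> i \<Longrightarrow> i < j \<Longrightarrow> j \<le> n \<Longrightarrow> x i < x j"
  shows "positive_ground_set (Bpos x n)" and "card (Bpos x n) = n"
    and "Bset x n = Bpos x n \<union> uminus ` (Bpos x n - {Max (Bpos x n)})"
proof -
  have P: "Bpos x n = x ` {1..n}"
    unfolding Bpos_def by auto
  have "strict_mono_on {1..n} x"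
    using incr by (intro strict_mono_onI) auto
  then show "card (Bpos x n) = n"
    unfolding P by (simp add: card_image strict_mono_on_imp_inj_on)
  show "positive_ground_set (Bpos x n)"
    using pos unfolding P by unfold_locales auto
  have "Max (Bpos x n) = x n"
    unfolding P using n incr by (intro Max_eqI) (auto simp: order_le_less)
  moreover have "x n \<notin> x ` {1..<n}"
    using incr[of _ n] by fastforce
  moreover have "{1..n} = insert n {1..<n}"
    using n by auto
  ultimately have "Bpos x n - {Max (Bpos x n)} = x ` {1..<n}"
    unfolding P by auto
  then show "Bset x n = Bpos x n \<union> uminus ` (Bpos x n - {Max (Bpos x n)})"
    unfolding Bset_def P by auto
qed

theorem mainTheorem10:
  fixes x :: "nat \<Rightarrow> real" and n k :: nat
  assumes n2: "n \<ge> 2" and k1: "1 \<le> k" and kn: "k < n"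
    and pos: "\<And>i. 1 \<le> i \<Longrightarrow> i \<le> n \<Longrightarrow> x i > 0"
    and incr: "\<And>i j. 1 \<le> i \<Longrightarrow> i < j \<Longrightarrow> j \<le> n \<Longrightarrow> x i < x j"
  shows
    \<comment> \<open>(i)\<close>
    "(\<forall>X \<in> V1 x n k. HBdeg x n k X = dV1 n k)
     \<and> dV1 n k = (3^k - 3) div 2 + 2^(k-1) * (3^(n-k) - 1)
     \<and> card (V1 x n k) = n choose k
     \<comment> \<open>(ii)\<close>
     \<and> (\<forall>r. 1 \<le> r \<and> r < k \<longrightarrow>
          (\<forall>Y \<in> V2 x n k. card Y = r \<longrightarrow> HBdeg x n k Y = (n - r) choose (k - r))
          \<and> card {Y \<in> V2 x n k. card Y = r} = 2^(r-1) * (n choose r))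
     \<comment> \<open>(iii)\<close>
     \<and> (\<forall>Y \<in> V2 x n k. card Y = k \<longrightarrow> HBdeg x n k Y = 1)
     \<and> card {Y \<in> V2 x n k. card Y = k} = (2^(k-1) - 1) * (n choose k)
     \<comment> \<open>(iv)\<close>
     \<and> (\<forall>r. k < r \<and> r \<le> n \<longrightarrow>
          (\<forall>Y \<in> V2 x n k. card Y = r \<longrightarrow> HBdeg x n k Y = r choose k)
          \<and> card {Y \<in> V2 x n k. card Y = r} = 2^(r-1) * (n choose r))
     \<comment> \<open>degree sequence, as a multiset of degrees (i.e. up to the non-increasing arrangement)\<close>
     \<and> image_mset (HBdeg x n k) (mset_set (HBverts x n k))
         = replicate_mset (n choose k) (dV1 n k)
           + (\<Sum>r\<in>{1..<k}. replicate_mset (2^(r-1) * (n choose r)) ((n - r) choose (k - r)))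
           + replicate_mset ((2^(k-1) - 1) * (n choose k)) 1
           + (\<Sum>r\<in>{k<..n}. replicate_mset (2^(r-1) * (n choose r)) (r choose k))"
proof -
  let ?P = "Bpos x n"
  have n: "1 \<le> n"
    using n2 by simp
  note ground = Bpos_ground_set[OF n pos incr]
  interpret kneser_B_graph ?P k
    using ground(1) k1 kn ground(2) by (simp add: kneser_B_graph_def kneser_B_graph_axioms_def)
  have V1_eq: "V1 x n k = k_subsets"
    unfolding V1_def k_subsets_def ..
  have "phiB x n = signed_sets"
    by (simp only: phiB_def signed_sets_def ground(3))
  then have V2_eq: "V2 x n k = other_signed_sets"
    unfolding V2_def other_signed_sets_def V1_eq by simp
  have deg_eq: "HBdeg x n k = degree"
    unfolding HBdeg_def degree_def HBverts_def HBadj_def adjacent_def dagger_def V1_eq V2_eq ..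
  show ?thesis
    unfolding V1_eq V2_eq deg_eq HBverts_def
    using degree_k_subset card_k_subsets dV1_closed_form[OF k1] degree_multiset
      degree_other_signed_set_less degree_other_signed_set_eq degree_other_signed_set_greater
      card_other_signed_sets_of_card card_other_signed_sets_of_card_k k1
    by (auto simp: ground(2))
qed

end
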